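(* Let $\{Q(C;\alpha)\}$ be a filtration of simplicial complexes on a finite set $C$. For every $\alpha\ge0$, the inclusion $\mathrm{HoPeS}(C;\alpha)\to Q(C;\alpha)$ induces an isomorphism $H_1(\mathrm{HoPeS}(C;\alpha);\mathbb{Z}_2)\to H_1(Q(C;\alpha);\mathbb{Z}_2)$.
   Context: A filtration on a finite set $C$: nested finite simplicial complexes $Q(C;\alpha)$, $\alpha\ge0$, with vertex set $C$, $Q(C;0)=C$, each simplex entering at a minimal scale; the final complex is connected. Edge length $|e|=2\min\{\alpha:e\subset Q(C;\alpha)\}$. $\mathrm{MST}(C)$ is a minimum total length spanning tree on $C$ using edges of the filtration; $\mathrm{MST}(C;\alpha)$ removes from it all open edges of length $>2\alpha$. Homology with $\mathbb{Z}_2$ coefficients. An edge is critical if its addition creates a new class in $H_1$ that does not immediately die; its birth is its entry scale. Deaths of critical edges: at scale $\alpha$, let $K_1,\dots,K_s$ be the critical edges with birth $\le\alpha$ not yet assigned a death; $[K_1],\dots,[K_s]$ form a basis of $H_1((\mathrm{MST}(C;\alpha)\cup\bigcup K_j)/\mathrm{MST}(C;\alpha))$; let $f$ be the map into $H_1(Q(C;\alpha)/\mathrm{MST}(C;\alpha))$ induced by inclusion; take a basis $b_1,\dots,b_r$ of $\ker f$, $b_i=\sum_j c_{ij}[K_j]$, and solve $\sum_j c_{ij}x_j=0$ over $\mathbb{Z}_2$ with $r$ leading variables chosen by the elder rule (the leading set whose critical edges have greatest combined birth); each $K_i$ with $i$ leading gets death $\alpha$. $\mathrm{HoPeS}(C)$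 is the union of $\mathrm{MST}(C)$ and all critical edges labelled by (birth, death). The reduced skeleton $\mathrm{HoPeS}(C;\alpha)$ is obtained from $\mathrm{HoPeS}(C)$ by removing all edges of length $>2\alpha$ and all critical edges with death $\le\alpha$. *)

theory Defs
  imports Main "HOL-Library.Extended_Real"
begin

text \<open>The whole filtration is given by
  the final complex K (a set of simplices) together with the entry scale ent of every
  simplex; Q(C;alpha) consists of the simplices of K with entry scale at most alpha.\<close>

definition filtration :: "'v set \<Rightarrow> 'v set set \<Rightarrow> ('v set \<Rightarrow> real) \<Rightarrow> bool" where
  "filtration C K ent \<longleftrightarrow>
     finite C
   \<and> (\<forall>\<sigma>\<in>K. \<sigma> \<noteq> {} \<and> \<sigma> \<subseteq> C)
   \<and> (\<forall>\<sigma>\<in>K. \<forall>\<tau>. \<tau> \<noteq> {} \<and> \<tau> \<subseteq> \<sigma> \<longrightarrow> \<tau> \<in> K)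
   \<and> (\<forall>v\<in>C. {v} \<in> K)
   \<and> (\<forall>\<sigma>\<in>K. 0 \<le> ent \<sigma>)
   \<and> (\<forall>\<sigma>\<in>K. \<forall>\<tau>. \<tau> \<noteq> {} \<and> \<tau> \<subseteq> \<sigma> \<longrightarrow> ent \<tau> \<le> ent \<sigma>)
   \<and> {\<sigma>\<in>K. ent \<sigma> \<le> 0} = {{v} | v. v \<in> C}"

definition Qc :: "'v set set \<Rightarrow> ('v set \<Rightarrow> real) \<Rightarrow> real \<Rightarrow> 'v set set" where
  "Qc K ent \<alpha> = {\<sigma>\<in>K. ent \<sigma> \<le> \<alpha>}"

definition edges :: "'v set set \<Rightarrow> 'v set set" where
  "edges X = {e\<in>X. card e = 2}"

definition triangles :: "'v set set \<Rightarrow> 'v set set" where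
  "triangles X = {t\<in>X. card t = 3}"

definition vertices_cplx :: "'v set \<Rightarrow> 'v set set" where
  "vertices_cplx C = {{v} | v. v \<in> C}"

definition edge_len :: "('v set \<Rightarrow> real) \<Rightarrow> 'v set \<Rightarrow> real" where
  "edge_len ent e = 2 * ent e"

definition adj :: "'v set set \<Rightarrow> ('v \<times> 'v) set" where
  "adj E = {(u, v). {u, v} \<in> E}"

definition graph_connected :: "'v set \<Rightarrow> 'v set set \<Rightarrow> bool" where
  "graph_connected C E \<longleftrightarrow> (\<forall>u\<in>C. \<forall>v\<in>C. (u, v) \<in> (adj E)\<^sup>*)"

definition spanning_tree :: "'v set \<Rightarrow> 'v set set \<Rightarrow> 'v set set \<Rightarrow> bool" where
  "spanning_tree C K T \<longleftrightarrow> T \<subseteq> edges K \<and> graph_connected C T \<and> card T = card C - 1"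

definition is_MST :: "'v set \<Rightarrow> 'v set set \<Rightarrow> ('v set \<Rightarrow> real) \<Rightarrow> 'v set set \<Rightarrow> bool" where
  "is_MST C K ent T \<longleftrightarrow> spanning_tree C K T \<and>
     (\<forall>T'. spanning_tree C K T' \<longrightarrow> (\<Sum>e\<in>T. edge_len ent e) \<le> (\<Sum>e\<in>T'. edge_len ent e))"

definition MST_at :: "'v set \<Rightarrow> ('v set \<Rightarrow> real) \<Rightarrow> 'v set set \<Rightarrow> real \<Rightarrow> 'v set set" where
  "MST_at C ent T \<alpha> = vertices_cplx C \<union> {e\<in>T. edge_len ent e \<le> 2 * \<alpha>}"

text \<open>Z_2-chains are finite sets of simplices; addition is symmetric difference.\<close>
definition symdiff :: "'a set \<Rightarrow> 'a set \<Rightarrow> 'a set" where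
  "symdiff A B = (A - B) \<union> (B - A)"

definition bd1 :: "'v set set \<Rightarrow> 'v set" where
  "bd1 z = {v. odd (card {e\<in>z. v \<in> e})}"

definition bd2 :: "'v set set \<Rightarrow> 'v set set" where
  "bd2 d = {e. card e = 2 \<and> odd (card {t\<in>d. e \<subseteq> t})}"

definition cycles1 :: "'v set set \<Rightarrow> 'v set set set" where
  "cycles1 X = {z. z \<subseteq> edges X \<and> bd1 z = {}}"

definition homologous :: "'v set set \<Rightarrow> 'v set set \<Rightarrow> 'v set set \<Rightarrow> bool" where
  "homologous X z z' \<longleftrightarrow> (\<exists>d. d \<subseteq> triangles X \<and> symdiff z z' = bd2 d)"

definition H1 :: "'v set set \<Rightarrow> 'v set set set set" where
  "H1 X = cycles1 X // {(z, z'). z \<in> cycles1 X \<and> z' \<in> cycles1 X \<and> homologous X z z'}"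

definition H1_incl :: "'v set set \<Rightarrow> 'v set set \<Rightarrow> 'v set set set \<Rightarrow> 'v set set set" where
  "H1_incl X Y c = {z'\<in>cycles1 Y. homologous Y (SOME z. z \<in> c) z'}"

text \<open>Relative homology H_1(X,Y) (= reduced H_1 of the quotient X/Y): the class of a
  relative 1-chain z is zero iff z is a boundary modulo chains of Y.\<close>
definition rel_null :: "'v set set \<Rightarrow> 'v set set \<Rightarrow> 'v set set \<Rightarrow> bool" where
  "rel_null X Y z \<longleftrightarrow> (\<exists>d y. d \<subseteq> triangles X \<and> y \<subseteq> edges Y \<and> z = symdiff (bd2 d) y)"

text \<open>The complex to which the edge e is added: all simplices entering strictly before e,
  and the MST edges entering at the same scale as e (other than e).\<close>
definition before_edge :: "'v set set \<Rightarrow> ('v set \<Rightarrow> real) \<Rightarrow> 'v set set \<Rightarrow> 'v set \<Rightarrow> 'v set set" where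
  "before_edge K ent T e = {\<sigma>\<in>K. ent \<sigma> < ent e} \<union> {f\<in>T. ent f = ent e \<and> f \<noteq> e}"

definition critical :: "'v set set \<Rightarrow> ('v set \<Rightarrow> real) \<Rightarrow> 'v set set \<Rightarrow> 'v set \<Rightarrow> bool" where
  "critical K ent T e \<longleftrightarrow> e \<in> edges K \<and>
     (let P = before_edge K ent T e; Pe = insert e P; Qe = Qc K ent (ent e) in
        (\<exists>z\<in>cycles1 Pe. e \<in> z) \<and>
        (\<forall>z\<in>cycles1 Pe. e \<in> z \<longrightarrow> \<not> (\<exists>y\<in>cycles1 P. homologous Qe z y)))"

text \<open>Subsets S of the alive critical edges A encode the coefficient vectors of
  sum_{K in S} [K] in H_1((MST(C;alpha) \<union> \<Union> A)/MST(C;alpha)); ker f is the set of those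
  whose image in H_1(Q(C;alpha)/MST(C;alpha)) vanishes.\<close>
definition ker_f :: "'v set \<Rightarrow> 'v set set \<Rightarrow> ('v set \<Rightarrow> real) \<Rightarrow> 'v set set \<Rightarrow> real
    \<Rightarrow> 'v set set \<Rightarrow> 'v set set set" where
  "ker_f C K ent T \<alpha> A = {S. S \<subseteq> A \<and> rel_null (Qc K ent \<alpha>) (MST_at C ent T \<alpha>) S}"

text \<open>L is a set of leading variables of the system sum_j c_ij x_j = 0 whose rows span W:
  |L| = dim W and for every value of the free variables (those in A - L) there is a
  unique solution x (a subset of A).\<close>
definition leading_set :: "'a set set \<Rightarrow> 'a set \<Rightarrow> 'a set \<Rightarrow> bool" where
  "leading_set W A L \<longleftrightarrow> L \<subseteq> A \<and> card W = 2 ^ card L \<and>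
     (\<forall>F. F \<subseteq> A - L \<longrightarrow>
        (\<exists>!x. x \<subseteq> A \<and> x \<inter> (A - L) = F \<and> (\<forall>b\<in>W. even (card (b \<inter> x)))))"

definition valid_deaths :: "'v set \<Rightarrow> 'v set set \<Rightarrow> ('v set \<Rightarrow> real) \<Rightarrow> 'v set set
    \<Rightarrow> ('v set \<Rightarrow> ereal) \<Rightarrow> bool" where
  "valid_deaths C K ent T D \<longleftrightarrow>
     (\<forall>e. critical K ent T e \<longrightarrow> D e \<noteq> -\<infinity>) \<and>
     (\<forall>\<alpha>::real.
        let A = {e. critical K ent T e \<and> ent e \<le> \<alpha> \<and> \<not> D e < ereal \<alpha>};
            W = ker_f C K ent T \<alpha> A;
            L = {e. critical K ent T e \<and> D e = ereal \<alpha>}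
        in L \<subseteq> A \<and> leading_set W A L \<and>
           (\<forall>L'. leading_set W A L' \<longrightarrow> (\<Sum>e\<in>L'. ent e) \<le> (\<Sum>e\<in>L. ent e)))"

definition HoPeS_at :: "'v set \<Rightarrow> 'v set set \<Rightarrow> ('v set \<Rightarrow> real) \<Rightarrow> 'v set set
    \<Rightarrow> ('v set \<Rightarrow> ereal) \<Rightarrow> real \<Rightarrow> 'v set set" where
  "HoPeS_at C K ent T D \<alpha> = vertices_cplx C \<union>
     {e\<in>T. edge_len ent e \<le> 2 * \<alpha>} \<union>
     {e. critical K ent T e \<and> edge_len ent e \<le> 2 * \<alpha> \<and> \<not> D e \<le> ereal \<alpha>}"

end

theory Submission
  imports Defs
begin

text \<open>HoPeS(C;\<alpha>) contains no triangles, so its H_1 is its cycle space, and the induced map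
  sends a cycle to its class in Q(C;\<alpha>).

  Surjectivity: modulo boundaries in Q(C;\<alpha>) and edges of MST(C;\<alpha>), every edge of Q(C;\<alpha>) is
  a sum of critical edges still alive at \<alpha>. This is an induction along the filtration: an
  MST edge is trivial, a non-critical edge is homologous to a chain of earlier edges plus MST
  edges (the MST cycle property supplies the tree path closing it up), and a critical edge that
  died at scale \<beta> \<le> \<alpha> is, by the elder rule, a relative boundary plus critical edges that die
  strictly later.

  Injectivity: if two cycles of HoPeS(C;\<alpha>) are homologous in Q(C;\<alpha>), the critical edges of
  their difference form an element of ker f supported on variables that are not leading at \<alpha>,
  hence vanish; what remains is a cycle in the tree MST(C), hence empty.\<close>

section \<open>Chains with \<open>\<int>\<^sub>2\<close> coefficients\<close>

lemma symdiff_commute: "symdiff A B = symdiff B A"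
  by (auto simp: symdiff_def)

lemma symdiff_empty [simp]: "symdiff A {} = A" "symdiff {} A = A" "symdiff A A = {}"
  by (auto simp: symdiff_def)

lemma symdiff_eq_empty_iff: "symdiff A B = {} \<longleftrightarrow> A = B"
  by (auto simp: symdiff_def)

lemma symdiff_subset: "A \<subseteq> X \<Longrightarrow> B \<subseteq> X \<Longrightarrow> symdiff A B \<subseteq> X"
  by (auto simp: symdiff_def)

lemma finite_symdiff: "finite A \<Longrightarrow> finite B \<Longrightarrow> finite (symdiff A B)"
  by (auto simp: symdiff_def)

lemma symdiff_cancel_left: "symdiff A (symdiff A B) = B"
  by (auto simp: symdiff_def)

lemma mem_symdiff: "x \<in> symdiff A B \<longleftrightarrow> (x \<in> A) \<noteq> (x \<in> B)"
  by (auto simp: symdiff_def)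

lemma insert_eq_symdiff: "t \<notin> d \<Longrightarrow> insert t d = symdiff {t} d"
  by (auto simp: symdiff_def)

lemma odd_card_filter_symdiff:
  assumes "finite A" "finite B"
  shows "odd (card {x\<in>symdiff A B. P x}) \<longleftrightarrow> odd (card {x\<in>A. P x}) \<noteq> odd (card {x\<in>B. P x})"
proof -
  have A: "{x\<in>A. P x} = {x\<in>A-B. P x} \<union> {x\<in>A\<inter>B. P x}"
    and B: "{x\<in>B. P x} = {x\<in>B-A. P x} \<union> {x\<in>A\<inter>B. P x}"
    and AB: "{x\<in>symdiff A B. P x} = {x\<in>A-B. P x} \<union> {x\<in>B-A. P x}"
    by (auto simp: symdiff_def)
  have cA: "card {x\<in>A. P x} = card {x\<in>A-B. P x} + card {x\<in>A\<inter>B. P x}"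
    unfolding A by (rule card_Un_disjoint) (use assms in auto)
  have cB: "card {x\<in>B. P x} = card {x\<in>B-A. P x} + card {x\<in>A\<inter>B. P x}"
    unfolding B by (rule card_Un_disjoint) (use assms in auto)
  have cAB: "card {x\<in>symdiff A B. P x} = card {x\<in>A-B. P x} + card {x\<in>B-A. P x}"
    unfolding AB by (rule card_Un_disjoint) (use assms in auto)
  show ?thesis
    unfolding cA cB cAB by auto
qed

lemma bd1_symdiff:
  assumes "finite A" "finite B"
  shows "bd1 (symdiff A B) = symdiff (bd1 A) (bd1 B)"
proof (rule set_eqI)
  fix v
  show "v \<in> bd1 (symdiff A B) \<longleftrightarrow> v \<in> symdiff (bd1 A) (bd1 B)"
    using odd_card_filter_symdiff[OF assms, of "\<lambda>e. v \<in> e"]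
    by (simp only: bd1_def mem_symdiff mem_Collect_eq)
qed

lemma bd2_symdiff:
  assumes "finite A" "finite B"
  shows "bd2 (symdiff A B) = symdiff (bd2 A) (bd2 B)"
proof (rule set_eqI)
  fix e
  show "e \<in> bd2 (symdiff A B) \<longleftrightarrow> e \<in> symdiff (bd2 A) (bd2 B)"
    using odd_card_filter_symdiff[OF assms, of "\<lambda>t. e \<subseteq> t"]
    unfolding bd2_def mem_symdiff mem_Collect_eq by blast
qed

lemma bd1_empty [simp]: "bd1 {} = {}"
  by (simp add: bd1_def)

lemma bd2_empty [simp]: "bd2 {} = {}"
  by (simp add: bd2_def)

lemma bd1_edge: "u \<noteq> v \<Longrightarrow> bd1 {{u, v}} = {u, v}"
proof -
  have "{e\<in>{{u, v}}. w \<in> e} = (if w \<in> {u, v} then {{u, v}} else {})" for w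
    by auto
  then show ?thesis
    unfolding bd1_def by auto
qed

lemma finite_bd2:
  assumes "finite d" "\<forall>t\<in>d. finite t"
  shows "finite (bd2 d)"
proof (rule finite_subset)
  show "bd2 d \<subseteq> \<Union> (Pow ` d)"
  proof
    fix e
    assume "e \<in> bd2 d"
    then have "odd (card {t\<in>d. e \<subseteq> t})"
      by (simp add: bd2_def)
    then have "{t\<in>d. e \<subseteq> t} \<noteq> {}"
      by (metis card.empty even_zero)
    then show "e \<in> \<Union> (Pow ` d)"
      by auto
  qed
  show "finite (\<Union> (Pow ` d))"
    using assms by auto
qed

lemma bd1_bd2_triangle:
  assumes "card t = 3"
  shows "bd1 (bd2 {t}) = {}"
proof -
  obtain x y z where t: "t = {x, y, z}" and d: "x \<noteq> y" "x \<noteq> z" "y \<noteq> z"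
    using assms card_3_iff by metis
  have "{s\<in>{t}. e \<subseteq> s} = (if e \<subseteq> t then {t} else {})" for e
    by auto
  then have "bd2 {t} = {e. card e = 2 \<and> e \<subseteq> t}"
    unfolding bd2_def by auto
  also have "\<dots> = {{x, y}, {x, z}, {y, z}}"
  proof (rule set_eqI, rule iffI)
    fix e
    assume "e \<in> {e. card e = 2 \<and> e \<subseteq> t}"
    then obtain a b where "e = {a, b}" "a \<noteq> b" "e \<subseteq> t"
      by (auto simp: card_2_iff)
    then show "e \<in> {{x, y}, {x, z}, {y, z}}"
      using t by auto
  next
    fix e
    assume "e \<in> {{x, y}, {x, z}, {y, z}}"
    then show "e \<in> {e. card e = 2 \<and> e \<subseteq> t}"
      using t d by auto
  qed
  finally have bd2t: "bd2 {t} = {{x, y}, {x, z}, {y, z}}" .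
  have "even (card {e\<in>{{x, y}, {x, z}, {y, z}}. w \<in> e})" for w
  proof -
    consider "w = x" | "w = y" | "w = z" | "w \<notin> {x, y, z}"
      by auto
    then show ?thesis
    proof cases
      case 1
      then have "{e\<in>{{x, y}, {x, z}, {y, z}}. w \<in> e} = {{x, y}, {x, z}}"
        using d by auto
      then show ?thesis
        using d by (simp add: doubleton_eq_iff)
    next
      case 2
      then have "{e\<in>{{x, y}, {x, z}, {y, z}}. w \<in> e} = {{x, y}, {y, z}}"
        using d by auto
      then show ?thesis
        using d by (simp add: doubleton_eq_iff)
    next
      case 3
      then have "{e\<in>{{x, y}, {x, z}, {y, z}}. w \<in> e} = {{x, z}, {y, z}}"
        using d by auto
      then show ?thesis
        using d by (simp add: doubleton_eq_iff)
    next
      case 4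
      then have "{e\<in>{{x, y}, {x, z}, {y, z}}. w \<in> e} = {}"
        by auto
      then show ?thesis
        by (simp only: card.empty even_zero)
    qed
  qed
  then show ?thesis
    unfolding bd2t bd1_def by auto
qed

lemma bd1_bd2:
  assumes "finite d" "\<forall>t\<in>d. card t = 3"
  shows "bd1 (bd2 d) = {}"
  using assms
proof (induction d rule: finite_induct)
  case empty
  then show ?case
    by simp
next
  case (insert t d)
  have finite_simplices: "\<forall>s\<in>insert t d. finite s"
    using insert.prems card.infinite by force
  have "bd2 (insert t d) = symdiff (bd2 {t}) (bd2 d)"
    unfolding insert_eq_symdiff[OF insert.hyps(2)] using insert.hyps(1) by (simp add: bd2_symdiff)
  moreover have "finite (bd2 {t})" "finite (bd2 d)"
    using finite_simplices insert.hyps(1) by (auto intro!: finite_bd2)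
  moreover have "bd1 (bd2 {t}) = {}"
    using insert.prems by (simp add: bd1_bd2_triangle)
  ultimately show ?case
    using insert by (simp add: bd1_symdiff)
qed

section \<open>Spanning trees\<close>

lemma adj_sym: "(u, v) \<in> adj E \<Longrightarrow> (v, u) \<in> adj E"
  by (auto simp: adj_def insert_commute)

lemma rtrancl_adj_sym: "(u, v) \<in> (adj E)\<^sup>* \<Longrightarrow> (v, u) \<in> (adj E)\<^sup>*"
proof -
  have "sym ((adj E)\<^sup>*)"
    by (rule sym_rtrancl, rule symI, rule adj_sym)
  then show "(u, v) \<in> (adj E)\<^sup>* \<Longrightarrow> (v, u) \<in> (adj E)\<^sup>*"
    by (auto dest: symD)
qed

lemma chain_of_walk:
  assumes "(u, x) \<in> (adj E)\<^sup>*"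
  shows "\<exists>c. finite c \<and> c \<subseteq> E \<and> bd1 c = symdiff {u} {x}"
  using assms
proof (induction rule: rtrancl_induct)
  case base
  show ?case
    by (rule exI[of _ "{}"]) simp
next
  case (step y z)
  then obtain c where c: "finite c" "c \<subseteq> E" "bd1 c = symdiff {u} {y}"
    by auto
  have yz: "{y, z} \<in> E"
    using step by (simp add: adj_def)
  show ?case
  proof (cases "y = z")
    case True
    then show ?thesis
      using c by auto
  next
    case False
    have "bd1 (symdiff c {{y, z}}) = symdiff (symdiff {u} {y}) {y, z}"
      using c bd1_edge[OF False] by (simp add: bd1_symdiff)
    also have "\<dots> = symdiff {u} {z}"
      using False by (auto simp: symdiff_def)
    finally show ?thesis
      using c yz by (intro exI[of _ "symdiff c {{y, z}}"]) (auto simp: symdiff_def)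
  qed
qed

lemma even_sum_iff_even_card_odd:
  fixes f :: "'a \<Rightarrow> nat"
  assumes "finite S"
  shows "even (sum f S) \<longleftrightarrow> even (card {w\<in>S. odd (f w)})"
  using assms
proof (induction S rule: finite_induct)
  case empty
  then show ?case
    by simp
next
  case (insert x S)
  have "{w\<in>insert x S. odd (f w)} =
      (if odd (f x) then insert x {w\<in>S. odd (f w)} else {w\<in>S. odd (f w)})"
    by auto
  then show ?case
    using insert by auto
qed

text \<open>Handshake argument: in the component X of a, the degrees in c sum to an even number, but
  a is the only vertex of X of odd degree unless b also lies in X.\<close>

lemma rtrancl_adj_if_bd1_eq:
  assumes fc: "finite c" and cE: "c \<subseteq> E" and c2: "\<forall>g\<in>c. card g = 2"
    and bd: "bd1 c = {a, b}" and ab: "a \<noteq> b"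
  shows "(a, b) \<in> (adj E)\<^sup>*"
proof (rule ccontr)
  assume nb: "(a, b) \<notin> (adj E)\<^sup>*"
  define X where "X = {w. (a, w) \<in> (adj E)\<^sup>*}"
  define V where "V = \<Union> c"
  have "\<forall>g\<in>c. finite g"
    using c2 card.infinite by force
  then have fVX: "finite (V \<inter> X)"
    using fc by (simp add: V_def)
  have "(\<Sum>w\<in>V\<inter>X. card {g\<in>c. w \<in> g}) = (\<Sum>g\<in>c. card {w\<in>V\<inter>X. w \<in> g})"
    using sum.swap_restrict[OF fVX fc, of "\<lambda>_ _. 1::nat" "\<lambda>w g. w \<in> g"] by simp
  also have "\<dots> = (\<Sum>g\<in>c. card (g \<inter> X))"
    by (rule sum.cong) (auto simp: V_def intro!: arg_cong[where f = card])
  finally have degree_sum: "(\<Sum>w\<in>V\<inter>X. card {g\<in>c. w \<in> g}) = (\<Sum>g\<in>c. card (g \<inter> X))" .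
  have "even (card (g \<inter> X))" if g: "g \<in> c" for g
  proof -
    obtain p q where pq: "g = {p, q}" "p \<noteq> q"
      using g c2 by (meson card_2_iff)
    have "(p, q) \<in> adj E"
      using g cE pq by (auto simp: adj_def)
    then have "p \<in> X \<longleftrightarrow> q \<in> X"
      unfolding X_def mem_Collect_eq using adj_sym rtrancl.rtrancl_into_rtrancl by metis
    then have "g \<inter> X = g \<or> g \<inter> X = {}"
      using pq by auto
    then show ?thesis
      using g c2 by auto
  qed
  then have "even (\<Sum>g\<in>c. card (g \<inter> X))"
    by (auto intro!: dvd_sum)
  then have "even (card {w\<in>V\<inter>X. odd (card {g\<in>c. w \<in> g})})"
    using degree_sum even_sum_iff_even_card_odd[OF fVX, of "\<lambda>w. card {g\<in>c. w \<in> g}"] by metis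
  moreover have "{w\<in>V\<inter>X. odd (card {g\<in>c. w \<in> g})} = {a}"
  proof -
    have "odd (card {g\<in>c. a \<in> g})"
      using bd by (auto simp: bd1_def)
    then have "{g\<in>c. a \<in> g} \<noteq> {}"
      by (metis card.empty even_zero)
    then have "a \<in> V"
      by (auto simp: V_def)
    moreover have "a \<in> X" "b \<notin> X"
      using nb by (simp_all add: X_def)
    ultimately show ?thesis
      using bd ab unfolding bd1_def by blast
  qed
  ultimately show False
    by simp
qed

text \<open>Breadth-first search from r: every other vertex w is joined to a predecessor one step
  closer to r, and w \<mapsto> {pred w, w} is injective.\<close>

lemma card_le_card_edges_if_connected:
  assumes fE: "finite E" and conn: "graph_connected C E" and r: "r \<in> C"
  shows "card (C - {r}) \<le> card E"
proof -
  let ?R = "adj E"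
  define dist where "dist w = (LEAST n. (r, w) \<in> ?R ^^ n)" for w
  have reach: "(r, w) \<in> ?R ^^ dist w" if "(r, w) \<in> ?R\<^sup>*" for w
    using that unfolding dist_def by (meson LeastI rtrancl_power)
  have dist_le: "(r, w) \<in> ?R ^^ n \<Longrightarrow> dist w \<le> n" for w n
    unfolding dist_def by (rule Least_le)
  define pred where "pred w = (SOME p. (r, p) \<in> ?R ^^ (dist w - 1) \<and> {p, w} \<in> E)" for w
  have pred: "{pred w, w} \<in> E \<and> dist (pred w) < dist w" if w: "w \<in> C - {r}" for w
  proof -
    have rw: "(r, w) \<in> ?R ^^ dist w"
      using reach conn r w by (auto simp: graph_connected_def)
    have "dist w \<noteq> 0"
      using rw w by (metis DiffD2 insertI1 pair_in_Id_conv relpow_0_E)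
    then obtain m where m: "dist w = Suc m"
      by (cases "dist w") auto
    then have "\<exists>p. (r, p) \<in> ?R ^^ (dist w - 1) \<and> {p, w} \<in> E"
      using rw by (auto simp: adj_def)
    then have P: "(r, pred w) \<in> ?R ^^ (dist w - 1) \<and> {pred w, w} \<in> E"
      unfolding pred_def by (rule someI_ex)
    then have "dist (pred w) \<le> dist w - 1"
      using dist_le by blast
    then show ?thesis
      using P m by simp
  qed
  have inj: "inj_on (\<lambda>w. {pred w, w}) (C - {r})"
  proof (rule inj_onI)
    fix w w'
    assume w: "w \<in> C - {r}" and w': "w' \<in> C - {r}" and eq: "{pred w, w} = {pred w', w'}"
    show "w = w'"
    proof (rule ccontr)
      assume "w \<noteq> w'"
      then have "w = pred w'" "w' = pred w"
        using eq by (auto simp: doubleton_eq_iff)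
      then show False
        using pred[OF w] pred[OF w'] by auto
    qed
  qed
  have "(\<lambda>w. {pred w, w}) ` (C - {r}) \<subseteq> E"
    using pred by auto
  then have "card ((\<lambda>w. {pred w, w}) ` (C - {r})) \<le> card E"
    using fE by (rule card_mono[rotated])
  then show ?thesis
    using card_image[OF inj] by simp
qed

lemma finite_spanning_tree:
  assumes "finite C" "\<forall>\<sigma>\<in>K. \<sigma> \<subseteq> C" "spanning_tree C K T"
  shows "finite T"
proof -
  have "T \<subseteq> Pow C"
    using assms(2,3) by (auto simp: spanning_tree_def edges_def)
  then show ?thesis
    using assms(1) by (metis finite_Pow_iff finite_subset)
qed

lemma graph_connected_exchange:
  assumes conn: "graph_connected C T" and ab: "(a, b) \<in> (adj T')\<^sup>*" and sub: "T - {{a, b}} \<subseteq> T'"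
  shows "graph_connected C T'"
proof -
  have "adj T \<subseteq> (adj T')\<^sup>*"
  proof
    fix p
    assume "p \<in> adj T"
    then obtain x y where p: "p = (x, y)" "{x, y} \<in> T"
      by (auto simp: adj_def)
    show "p \<in> (adj T')\<^sup>*"
    proof (cases "{x, y} = {a, b}")
      case True
      then have "(x = a \<and> y = b) \<or> (x = b \<and> y = a)"
        by (auto simp: doubleton_eq_iff)
      then show ?thesis
        using ab rtrancl_adj_sym p by auto
    next
      case False
      then show ?thesis
        using sub p by (auto simp: adj_def)
    qed
  qed
  then have "(adj T)\<^sup>* \<subseteq> (adj T')\<^sup>*"
    by (rule rtrancl_subset_rtrancl)
  then show ?thesis
    using conn by (auto simp: graph_connected_def)
qed

text \<open>Removing an edge f of a nonempty cycle z keeps T connected (the rest of z joins the ends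
  of f), which is impossible with only card C - 2 edges left.\<close>

lemma spanning_tree_cycle_empty:
  assumes fC: "finite C" and st: "spanning_tree C K T" and KC: "\<forall>\<sigma>\<in>K. \<sigma> \<subseteq> C"
    and zT: "z \<subseteq> T" and bz: "bd1 z = {}"
  shows "z = {}"
proof (rule ccontr)
  assume "z \<noteq> {}"
  then obtain f where fz: "f \<in> z"
    by auto
  have TK: "T \<subseteq> edges K" and conn: "graph_connected C T" and cT: "card T = card C - 1"
    using st by (auto simp: spanning_tree_def)
  have fT: "finite T"
    using finite_spanning_tree fC KC st by blast
  have "card f = 2" "f \<subseteq> C"
    using TK KC zT fz by (auto simp: edges_def)
  then obtain a b where f: "f = {a, b}" "a \<noteq> b" and aC: "a \<in> C" "b \<in> C"
    unfolding card_2_iff by blast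
  have fzz: "finite z"
    using fT zT finite_subset by auto
  let ?c = "symdiff z {f}"
  have c_sub: "?c \<subseteq> T - {f}"
    using zT fz by (auto simp: symdiff_def)
  have "(a, b) \<in> (adj (T - {f}))\<^sup>*"
  proof (rule rtrancl_adj_if_bd1_eq)
    show "finite ?c"
      using fzz by (simp add: finite_symdiff)
    show "\<forall>g\<in>?c. card g = 2"
      using c_sub TK by (auto simp: edges_def)
    show "bd1 ?c = {a, b}"
      using bd1_symdiff[OF fzz, of "{f}"] bz bd1_edge[OF f(2)] f(1) by simp
  qed (use c_sub f in auto)
  then have "graph_connected C (T - {f})"
    using graph_connected_exchange[OF conn] f(1) by blast
  then have "card (C - {a}) \<le> card (T - {f})"
    using card_le_card_edges_if_connected[OF _ _ aC(1)] fT by blast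
  moreover have "card (T - {f}) = card T - 1"
    using fz zT fT by (simp add: subsetD)
  moreover have "card {a, b} \<le> card C"
    using aC by (intro card_mono[OF fC]) auto
  then have "2 \<le> card C"
    using f(2) by simp
  moreover have "card (C - {a}) = card C - 1"
    using aC fC by simp
  ultimately show False
    using cT by linarith
qed

text \<open>Cycle property of minimum spanning trees: an edge e outside T is closed up by a tree path
  none of whose edges enters after e; otherwise exchanging a later edge for e would give a
  lighter spanning tree.\<close>

lemma MST_path_before_edge:
  assumes fC: "finite C" and KC: "\<forall>\<sigma>\<in>K. \<sigma> \<subseteq> C"
    and mst: "is_MST C K ent T" and e: "e \<in> edges K" and eT: "e \<notin> T"
  shows "\<exists>c. finite c \<and> c \<subseteq> {f\<in>T. ent f \<le> ent e} \<and> bd1 c = e"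
proof -
  have st: "spanning_tree C K T"
    using mst by (simp add: is_MST_def)
  then have TK: "T \<subseteq> edges K" and conn: "graph_connected C T" and cT: "card T = card C - 1"
    by (auto simp: spanning_tree_def)
  have fT: "finite T"
    using finite_spanning_tree fC KC st by blast
  have "card e = 2" "e \<subseteq> C"
    using e KC by (auto simp: edges_def)
  then obtain u v where uv: "e = {u, v}" "u \<noteq> v" and uvC: "u \<in> C" "v \<in> C"
    unfolding card_2_iff by blast
  have walk: "(u, v) \<in> (adj T)\<^sup>*"
    using conn uvC unfolding graph_connected_def by blast
  obtain c where c: "finite c" "c \<subseteq> T" "bd1 c = symdiff {u} {v}"
    using chain_of_walk[OF walk] by blast
  have bc: "bd1 c = e"
    unfolding c(3) uv(1) using uv(2) by (auto simp: symdiff_def)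
  have "ent f \<le> ent e" if fc: "f \<in> c" for f
  proof (rule ccontr)
    assume fe: "\<not> ent f \<le> ent e"
    have fT2: "f \<in> T"
      using fc c by auto
    then obtain a b where f: "f = {a, b}" "a \<noteq> b"
      using TK by (auto simp: edges_def card_2_iff)
    define T' where "T' = insert e (T - {f})"
    define c' where "c' = symdiff (symdiff c {f}) {e}"
    have fc': "finite c'"
      using c by (simp add: c'_def finite_symdiff)
    have "bd1 c' = symdiff (symdiff (bd1 c) (bd1 {f})) (bd1 {e})"
      unfolding c'_def using c by (simp add: bd1_symdiff finite_symdiff)
    also have "\<dots> = symdiff (symdiff e {a, b}) e"
      unfolding bc using bd1_edge[OF f(2)] bd1_edge[OF uv(2)] f(1) uv(1) by simp
    also have "\<dots> = {a, b}"
      by (auto simp: symdiff_def)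
    finally have bc': "bd1 c' = {a, b}" .
    have c'T: "c' \<subseteq> T'"
      using c fc eT by (auto simp: c'_def T'_def symdiff_def)
    have "\<forall>g\<in>c'. card g = 2"
      using c'T TK e by (auto simp: T'_def edges_def)
    then have "(a, b) \<in> (adj T')\<^sup>*"
      by (rule rtrancl_adj_if_bd1_eq[OF fc' c'T _ bc' f(2)])
    then have "graph_connected C T'"
      using graph_connected_exchange[OF conn] f(1) by (auto simp: T'_def)
    moreover have "card T' = Suc (card (T - {f}))"
      using fT eT by (simp add: T'_def)
    then have "card T' = card T"
      using card_Suc_Diff1[OF fT fT2] by simp
    ultimately have "spanning_tree C K T'"
      using TK e cT by (auto simp: spanning_tree_def T'_def)
    then have "(\<Sum>g\<in>T. edge_len ent g) \<le> (\<Sum>g\<in>T'. edge_len ent g)"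
      using mst by (simp add: is_MST_def)
    moreover have "(\<Sum>g\<in>T'. edge_len ent g) = edge_len ent e + (\<Sum>g\<in>T - {f}. edge_len ent g)"
      using fT eT by (simp add: T'_def)
    moreover have "(\<Sum>g\<in>T. edge_len ent g) = edge_len ent f + (\<Sum>g\<in>T - {f}. edge_len ent g)"
      using fT fT2 by (rule sum.remove)
    ultimately show False
      using fe by (simp add: edge_len_def)
  qed
  then show ?thesis
    using c bc by (intro exI[of _ c]) auto
qed

section \<open>Relative chains\<close>

lemma triangles_subset: "triangles X \<subseteq> X"
  by (auto simp: triangles_def)

lemma triangles_mono: "X \<subseteq> X' \<Longrightarrow> triangles X \<subseteq> triangles X'"
  by (auto simp: triangles_def)

lemma edges_mono: "X \<subseteq> X' \<Longrightarrow> edges X \<subseteq> edges X'"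
  by (auto simp: edges_def)

lemma finite_subset_triangles: "finite X \<Longrightarrow> d \<subseteq> triangles X \<Longrightarrow> finite d"
  by (rule finite_subset[OF order_trans[OF _ triangles_subset]])

lemma rel_null_empty: "rel_null X Y {}"
  unfolding rel_null_def by (rule exI[of _ "{}"], rule exI[of _ "{}"]) simp

lemma rel_null_edge: "e \<in> edges Y \<Longrightarrow> rel_null X Y {e}"
  unfolding rel_null_def by (rule exI[of _ "{}"], rule exI[of _ "{e}"]) simp

lemma rel_null_bd2: "d \<subseteq> triangles X \<Longrightarrow> rel_null X Y (bd2 d)"
  unfolding rel_null_def by (rule exI[of _ d], rule exI[of _ "{}"]) simp

lemma rel_null_mono:
  assumes "X \<subseteq> X'" "Y \<subseteq> Y'" "rel_null X Y z"
  shows "rel_null X' Y' z"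
proof -
  obtain d y where dy: "d \<subseteq> triangles X" "y \<subseteq> edges Y" "z = symdiff (bd2 d) y"
    using assms(3) unfolding rel_null_def by blast
  have "d \<subseteq> triangles X'"
    using dy(1) triangles_mono[OF assms(1)] by (rule subset_trans)
  moreover have "y \<subseteq> edges Y'"
    using dy(2) edges_mono[OF assms(2)] by (rule subset_trans)
  ultimately show ?thesis
    using dy(3) unfolding rel_null_def by blast
qed

lemma rel_null_symdiff:
  assumes "finite X" and "rel_null X Y z1" and "rel_null X Y z2"
  shows "rel_null X Y (symdiff z1 z2)"
proof -
  obtain d1 y1 where 1: "d1 \<subseteq> triangles X" "y1 \<subseteq> edges Y" "z1 = symdiff (bd2 d1) y1"
    using assms(2) unfolding rel_null_def by blast
  obtain d2 y2 where 2: "d2 \<subseteq> triangles X" "y2 \<subseteq> edges Y" "z2 = symdiff (bd2 d2) y2"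
    using assms(3) unfolding rel_null_def by blast
  have "bd2 (symdiff d1 d2) = symdiff (bd2 d1) (bd2 d2)"
    using 1(1) 2(1) assms(1) by (intro bd2_symdiff) (auto intro: finite_subset_triangles)
  then have "symdiff z1 z2 = symdiff (bd2 (symdiff d1 d2)) (symdiff y1 y2)"
    unfolding 1(3) 2(3) by (auto simp: symdiff_def)
  moreover have "symdiff d1 d2 \<subseteq> triangles X"
    using 1(1) 2(1) by (rule symdiff_subset)
  moreover have "symdiff y1 y2 \<subseteq> edges Y"
    using 1(2) 2(2) by (rule symdiff_subset)
  ultimately show ?thesis
    unfolding rel_null_def by blast
qed

text \<open>The class of c in H_1(X,Y) is a sum of classes of edges in A.\<close>

definition represented :: "'v set set \<Rightarrow> 'v set set \<Rightarrow> 'v set set \<Rightarrow> 'v set set \<Rightarrow> bool" where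
  "represented X Y A c \<longleftrightarrow> (\<exists>S\<subseteq>A. rel_null X Y (symdiff c S))"

lemma represented_empty: "represented X Y A {}"
  unfolding represented_def using rel_null_empty by fastforce

lemma represented_subset: "S \<subseteq> A \<Longrightarrow> represented X Y A S"
  unfolding represented_def using rel_null_empty by (metis symdiff_empty(3))

lemma represented_symdiff:
  assumes "finite X" "represented X Y A c1" "represented X Y A c2"
  shows "represented X Y A (symdiff c1 c2)"
proof -
  obtain S1 S2 where S: "S1 \<subseteq> A" "S2 \<subseteq> A"
    "rel_null X Y (symdiff c1 S1)" "rel_null X Y (symdiff c2 S2)"
    using assms(2,3) by (auto simp: represented_def)
  have "symdiff (symdiff c1 S1) (symdiff c2 S2) = symdiff (symdiff c1 c2) (symdiff S1 S2)"
    by (auto simp: symdiff_def)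
  then have "rel_null X Y (symdiff (symdiff c1 c2) (symdiff S1 S2))"
    using rel_null_symdiff[OF assms(1) S(3,4)] by simp
  moreover have "symdiff S1 S2 \<subseteq> A"
    using S(1,2) by (rule symdiff_subset)
  ultimately show ?thesis
    unfolding represented_def by blast
qed

lemma represented_if_edges_represented:
  assumes "finite X" "finite F" "\<forall>g\<in>F. represented X Y A {g}"
  shows "represented X Y A F"
  using assms(2,3)
proof (induction F rule: finite_induct)
  case empty
  show ?case
    by (rule represented_empty)
next
  case (insert g F)
  then have "represented X Y A (symdiff {g} F)"
    using represented_symdiff[OF assms(1)] by simp
  then show ?case
    using insert_eq_symdiff[OF insert.hyps(2)] by simp
qed

lemma represented_if_rel_null_symdiff:
  assumes "finite X" "rel_null X Y (symdiff c c')" "represented X Y A c'"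
  shows "represented X Y A c"
proof -
  obtain S where S: "S \<subseteq> A" "rel_null X Y (symdiff c' S)"
    using assms(3) by (auto simp: represented_def)
  have "symdiff (symdiff c c') (symdiff c' S) = symdiff c S"
    by (auto simp: symdiff_def)
  then have "rel_null X Y (symdiff c S)"
    using rel_null_symdiff[OF assms(1,2) S(2)] by simp
  then show ?thesis
    using S(1) unfolding represented_def by blast
qed

section \<open>Leading variables\<close>

text \<open>Setting the free variables to a unit vector {e}, the unique solution x meets every b
  in W in an even number of elements; a b that lives on the free variables meets x in {e}.\<close>

lemma leading_set_free_part_zero:
  assumes "leading_set W A L" "b \<in> W" "b \<subseteq> A" "b \<inter> L = {}"
  shows "b = {}"
proof (rule ccontr)
  assume "b \<noteq> {}"
  then obtain e where e: "e \<in> b"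
    by auto
  then have "{e} \<subseteq> A - L"
    using assms(3,4) by auto
  moreover have "\<forall>F. F \<subseteq> A - L \<longrightarrow>
      (\<exists>!x. x \<subseteq> A \<and> x \<inter> (A - L) = F \<and> (\<forall>b\<in>W. even (card (b \<inter> x))))"
    using assms(1) by (simp add: leading_set_def)
  ultimately have "\<exists>!x. x \<subseteq> A \<and> x \<inter> (A - L) = {e} \<and> (\<forall>b\<in>W. even (card (b \<inter> x)))"
    by simp
  then obtain x where x: "x \<subseteq> A" "x \<inter> (A - L) = {e}" "\<forall>b\<in>W. even (card (b \<inter> x))"
    by (meson ex1_implies_ex)
  have "b \<inter> x = {e}"
    using x e assms(3,4) by blast
  then show False
    using x(3) assms(2) by fastforce
qed

text \<open>Restriction to L is injective on the subspace W and |W| = 2^|L|, so it is onto Pow L.\<close>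

lemma leading_set_unit_vector:
  assumes fA: "finite A" and ls: "leading_set W A L" and WA: "\<forall>b\<in>W. b \<subseteq> A"
    and W_closed: "\<forall>b1\<in>W. \<forall>b2\<in>W. symdiff b1 b2 \<in> W" and eL: "e \<in> L"
  shows "\<exists>b\<in>W. b \<inter> L = {e}"
proof -
  have fL: "finite L"
    using ls fA finite_subset by (auto simp: leading_set_def)
  have "inj_on (\<lambda>b. b \<inter> L) W"
  proof (rule inj_onI)
    fix b1 b2
    assume b: "b1 \<in> W" "b2 \<in> W" "b1 \<inter> L = b2 \<inter> L"
    have "symdiff b1 b2 \<inter> L = {}"
      using b(3) by (auto simp: symdiff_def)
    moreover have "symdiff b1 b2 \<subseteq> A"
      using WA b by (simp add: symdiff_subset)
    ultimately have "symdiff b1 b2 = {}"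
      using leading_set_free_part_zero[OF ls] W_closed b by blast
    then show "b1 = b2"
      by (simp add: symdiff_eq_empty_iff)
  qed
  then have "card ((\<lambda>b. b \<inter> L) ` W) = card (Pow L)"
    using ls fL by (simp add: leading_set_def card_image card_Pow)
  then have "(\<lambda>b. b \<inter> L) ` W = Pow L"
    using fL by (intro card_subset_eq) auto
  then show ?thesis
    using eL by (metis Pow_iff empty_subsetI imageE insert_subset)
qed

section \<open>Homology of an inclusion\<close>

lemma homologous_refl: "homologous X z z"
  unfolding homologous_def by (rule exI[of _ "{}"]) simp

lemma homologous_sym: "homologous X z z' \<Longrightarrow> homologous X z' z"
  unfolding homologous_def by (metis symdiff_commute)

lemma homologous_iff_rel_null: "homologous X z z' \<longleftrightarrow> rel_null X {} (symdiff z z')"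
  by (simp add: homologous_def rel_null_def edges_def)

lemma homologous_trans:
  assumes "finite X" "homologous X z1 z2" "homologous X z2 z3"
  shows "homologous X z1 z3"
proof -
  have "rel_null X {} (symdiff (symdiff z1 z2) (symdiff z2 z3))"
    using assms by (simp add: homologous_iff_rel_null rel_null_symdiff)
  moreover have "symdiff (symdiff z1 z2) (symdiff z2 z3) = symdiff z1 z3"
    by (auto simp: symdiff_def)
  ultimately show ?thesis
    by (simp add: homologous_iff_rel_null)
qed

definition homology_rel :: "'v set set \<Rightarrow> ('v set set \<times> 'v set set) set" where
  "homology_rel X = {(z, z'). z \<in> cycles1 X \<and> z' \<in> cycles1 X \<and> homologous X z z'}"

lemma equiv_homology_rel: "finite X \<Longrightarrow> equiv (cycles1 X) (homology_rel X)"
  unfolding equiv_def refl_on_def sym_def trans_def homology_rel_def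
  using homologous_refl homologous_sym homologous_trans by blast

lemma H1_no_triangles:
  assumes "triangles X = {}"
  shows "H1 X = (\<lambda>z. {z}) ` cycles1 X"
proof -
  have "homologous X z z' \<longleftrightarrow> z = z'" for z z'
    using assms by (simp add: homologous_def symdiff_eq_empty_iff)
  then have "homology_rel X `` {z} = {z}" if "z \<in> cycles1 X" for z
    using that by (auto simp: homology_rel_def)
  then show ?thesis
    unfolding H1_def homology_rel_def[symmetric] quotient_def by auto
qed

lemma bij_betw_H1_incl:
  assumes fY: "finite Y" and no_triangles: "triangles X = {}" and XY: "edges X \<subseteq> edges Y"
    and inj: "\<And>z1 z2. z1 \<in> cycles1 X \<Longrightarrow> z2 \<in> cycles1 X \<Longrightarrow> homologous Y z1 z2 \<Longrightarrow> z1 = z2"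
    and surj: "\<And>z. z \<in> cycles1 Y \<Longrightarrow> \<exists>w\<in>cycles1 X. homologous Y z w"
  shows "bij_betw (H1_incl X Y) (H1 X) (H1 Y)"
proof -
  have eqv: "equiv (cycles1 Y) (homology_rel Y)"
    using fY by (rule equiv_homology_rel)
  have cycles_XY: "cycles1 X \<subseteq> cycles1 Y"
    using XY by (auto simp: cycles1_def)
  have H1X: "H1 X = (\<lambda>z. {z}) ` cycles1 X"
    using no_triangles by (rule H1_no_triangles)
  have H1Y: "H1 Y = cycles1 Y // homology_rel Y"
    by (simp add: H1_def homology_rel_def)
  have incl: "H1_incl X Y {z} = homology_rel Y `` {z}" if "z \<in> cycles1 X" for z
    using that cycles_XY by (auto simp: H1_incl_def homology_rel_def)
  have "inj_on (H1_incl X Y) (H1 X)"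
  proof (rule inj_onI)
    fix c1 c2
    assume "c1 \<in> H1 X" "c2 \<in> H1 X" and eq: "H1_incl X Y c1 = H1_incl X Y c2"
    then obtain z1 z2 where z: "c1 = {z1}" "c2 = {z2}" "z1 \<in> cycles1 X" "z2 \<in> cycles1 X"
      unfolding H1X by blast
    then have "homology_rel Y `` {z1} = homology_rel Y `` {z2}"
      using eq incl by simp
    moreover have "z1 \<in> cycles1 Y" "z2 \<in> cycles1 Y"
      using z cycles_XY by auto
    ultimately have "(z1, z2) \<in> homology_rel Y"
      using eq_equiv_class_iff[OF eqv] by blast
    then show "c1 = c2"
      using inj z by (simp add: homology_rel_def)
  qed
  moreover have "H1_incl X Y ` H1 X = H1 Y"
  proof
    show "H1_incl X Y ` H1 X \<subseteq> H1 Y"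
    proof
      fix c
      assume "c \<in> H1_incl X Y ` H1 X"
      then obtain z where z: "z \<in> cycles1 X" "c = H1_incl X Y {z}"
        unfolding H1X by blast
      then have "c = homology_rel Y `` {z}"
        using incl by simp
      then show "c \<in> H1 Y"
        unfolding H1Y using z(1) cycles_XY by (auto intro: quotientI)
    qed
  next
    show "H1 Y \<subseteq> H1_incl X Y ` H1 X"
    proof
      fix c
      assume "c \<in> H1 Y"
      then obtain z where z: "z \<in> cycles1 Y" "c = homology_rel Y `` {z}"
        unfolding H1Y by (auto elim: quotientE)
      obtain w where w: "w \<in> cycles1 X" "homologous Y z w"
        using surj[OF z(1)] by blast
      then have "(z, w) \<in> homology_rel Y"
        using z(1) cycles_XY by (auto simp: homology_rel_def)
      then have "c = H1_incl X Y {w}"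
        using z(2) w(1) incl equiv_class_eq[OF eqv] by simp
      then show "c \<in> H1_incl X Y ` H1 X"
        using w(1) unfolding H1X by blast
    qed
  qed
  ultimately show ?thesis
    unfolding bij_betw_def by blast
qed

section \<open>The filtration and its minimum spanning tree\<close>

locale MST_filtration =
  fixes C :: "'v set" and K :: "'v set set" and ent :: "'v set \<Rightarrow> real"
    and T :: "'v set set" and D :: "'v set \<Rightarrow> ereal"
  assumes filtration: "filtration C K ent" and MST: "is_MST C K ent T"
    and deaths: "valid_deaths C K ent T D"
begin

abbreviation Q :: "real \<Rightarrow> 'v set set" where
  "Q \<equiv> Qc K ent"

abbreviation M :: "real \<Rightarrow> 'v set set" where
  "M \<equiv> MST_at C ent T"

abbreviation HoPeS :: "real \<Rightarrow> 'v set set" where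
  "HoPeS \<equiv> HoPeS_at C K ent T D"

definition alive :: "real \<Rightarrow> 'v set set" where
  "alive \<alpha> = {e. critical K ent T e \<and> edge_len ent e \<le> 2 * \<alpha> \<and> \<not> D e \<le> ereal \<alpha>}"

definition unassigned :: "real \<Rightarrow> 'v set set" where
  "unassigned \<alpha> = {e. critical K ent T e \<and> ent e \<le> \<alpha> \<and> \<not> D e < ereal \<alpha>}"

definition dying :: "real \<Rightarrow> 'v set set" where
  "dying \<alpha> = {e. critical K ent T e \<and> D e = ereal \<alpha>}"

lemma finite_C: "finite C"
  using filtration by (simp add: filtration_def)

lemma simplices_subset_C: "\<forall>\<sigma>\<in>K. \<sigma> \<subseteq> C"
  using filtration by (simp add: filtration_def)

lemma finite_K: "finite K"
proof -
  have "K \<subseteq> Pow C"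
    using simplices_subset_C by auto
  then show ?thesis
    using finite_C by (metis finite_Pow_iff finite_subset)
qed

lemma spanning_tree: "spanning_tree C K T"
  using MST by (simp add: is_MST_def)

lemma T_subset_edges: "T \<subseteq> edges K"
  using spanning_tree by (simp add: spanning_tree_def)

lemma finite_Q: "finite (Q \<alpha>)"
  unfolding Qc_def using finite_K by simp

lemma Q_mono: "\<alpha> \<le> \<beta> \<Longrightarrow> Q \<alpha> \<subseteq> Q \<beta>"
  by (auto simp: Qc_def)

lemma M_mono: "\<alpha> \<le> \<beta> \<Longrightarrow> M \<alpha> \<subseteq> M \<beta>"
  by (auto simp: MST_at_def)

lemma critical_in_edges: "critical K ent T e \<Longrightarrow> e \<in> edges K"
  by (simp add: critical_def)

lemma finite_critical: "finite {e. critical K ent T e}"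
  using finite_K critical_in_edges by (auto simp: edges_def intro: finite_subset)

lemma leading_set_dying:
  "leading_set (ker_f C K ent T \<alpha> (unassigned \<alpha>)) (unassigned \<alpha>) (dying \<alpha>)"
  using deaths unfolding valid_deaths_def Let_def unassigned_def dying_def by blast

lemma represented_MST_edge:
  assumes "g \<in> T" "ent g \<le> \<alpha>"
  shows "represented (Q \<alpha>) (M \<alpha>) A {g}"
proof -
  have "g \<in> edges (M \<alpha>)"
    using assms T_subset_edges by (auto simp: MST_at_def edges_def edge_len_def)
  then show ?thesis
    unfolding represented_def by (intro exI[of _ "{}"]) (simp add: rel_null_edge)
qed

text \<open>By the elder rule, a critical edge dying at \<beta> is the leading variable of an element of
  ker f whose other variables are free, i.e. critical edges that die later.\<close>

lemma dying_edge_rel_null: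
  assumes e: "critical K ent T e" and De: "D e = ereal \<beta>"
  obtains b where "finite b" "rel_null (Q \<beta>) (M \<beta>) b" "e \<in> b"
    "\<forall>f\<in>b - {e}. critical K ent T f \<and> ent f \<le> \<beta> \<and> D e < D f"
proof -
  let ?A = "unassigned \<beta>" and ?W = "ker_f C K ent T \<beta> (unassigned \<beta>)"
  have fA: "finite ?A"
    using finite_critical by (rule finite_subset[rotated]) (auto simp: unassigned_def)
  have WA: "\<forall>b\<in>?W. b \<subseteq> ?A"
    by (simp add: ker_f_def)
  have W_closed: "\<forall>b1\<in>?W. \<forall>b2\<in>?W. symdiff b1 b2 \<in> ?W"
    unfolding ker_f_def using finite_Q by (simp add: symdiff_subset rel_null_symdiff)
  have "e \<in> dying \<beta>"
    using e De by (simp add: dying_def)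
  then obtain b where b: "b \<in> ?W" "b \<inter> dying \<beta> = {e}"
    using leading_set_unit_vector[OF fA leading_set_dying WA W_closed] by blast
  have bA: "b \<subseteq> ?A"
    using b WA by auto
  show thesis
  proof
    show "finite b"
      using bA fA by (rule finite_subset)
    show "rel_null (Q \<beta>) (M \<beta>) b" "e \<in> b"
      using b by (auto simp: ker_f_def)
    show "\<forall>f\<in>b - {e}. critical K ent T f \<and> ent f \<le> \<beta> \<and> D e < D f"
    proof
      fix f
      assume "f \<in> b - {e}"
      then have "f \<in> ?A" "f \<notin> dying \<beta>"
        using bA b by auto
      then show "critical K ent T f \<and> ent f \<le> \<beta> \<and> D e < D f"
        using De by (auto simp: unassigned_def dying_def)
    qed
  qed
qed

lemma represented_critical_edge:
  assumes "critical K ent T e" "ent e \<le> \<alpha>"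
  shows "represented (Q \<alpha>) (M \<alpha>) (alive \<alpha>) {e}"
  using assms
proof (induction "card {f. critical K ent T f \<and> D e < D f}" arbitrary: e rule: less_induct)
  case less
  show ?case
  proof (cases "D e \<le> ereal \<alpha>")
    case False
    then have "{e} \<subseteq> alive \<alpha>"
      using less.prems by (simp add: alive_def edge_len_def)
    then show ?thesis
      by (rule represented_subset)
  next
    case True
    have "D e \<noteq> -\<infinity>"
      using deaths less.prems by (simp add: valid_deaths_def)
    then obtain \<beta> where \<beta>: "D e = ereal \<beta>" "\<beta> \<le> \<alpha>"
      using True by (cases "D e") auto
    obtain b where b: "finite b" "rel_null (Q \<beta>) (M \<beta>) b" "e \<in> b"
      and later: "\<forall>f\<in>b - {e}. critical K ent T f \<and> ent f \<le> \<beta> \<and> D e < D f"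
      using dying_edge_rel_null[OF less.prems(1) \<beta>(1)] by blast
    have "represented (Q \<alpha>) (M \<alpha>) (alive \<alpha>) {f}" if f: "f \<in> b - {e}" for f
    proof -
      have "critical K ent T f \<and> ent f \<le> \<beta> \<and> D e < D f"
        using later f by blast
      then have cf: "critical K ent T f" "ent f \<le> \<alpha>" "D e < D f"
        using \<beta>(2) by auto
      have "{h. critical K ent T h \<and> D f < D h} \<subset> {h. critical K ent T h \<and> D e < D h}"
        using cf by (auto intro: less_trans)
      then have "card {h. critical K ent T h \<and> D f < D h} < card {h. critical K ent T h \<and> D e < D h}"
        by (rule psubset_card_mono[rotated]) (rule finite_subset[OF _ finite_critical], auto)
      then show ?thesis
        using less.hyps cf by blast
    qed
    then have rest: "represented (Q \<alpha>) (M \<alpha>) (alive \<alpha>) (b - {e})"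
      using finite_Q b(1) by (intro represented_if_edges_represented) auto
    have "symdiff {e} (b - {e}) = b"
      using b(3) by (auto simp: symdiff_def)
    then have "rel_null (Q \<alpha>) (M \<alpha>) (symdiff {e} (b - {e}))"
      using rel_null_mono[OF Q_mono[OF \<beta>(2)] M_mono[OF \<beta>(2)] b(2)] by simp
    then show ?thesis
      using represented_if_rel_null_symdiff[OF finite_Q _ rest] by blast
  qed
qed


text \<open>The tree path closing up e lies in the complex before e, so e lies on a cycle there;
  as e is not critical, that cycle is homologous in Q(C; ent e) to a cycle avoiding e.\<close>

lemma noncritical_edge_rel_null:
  assumes eK: "e \<in> edges K" and eT: "e \<notin> T" and nc: "\<not> critical K ent T e"
  obtains c where "c \<subseteq> edges (before_edge K ent T e)"
    "rel_null (Q (ent e)) (M (ent e)) (symdiff {e} c)"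
proof -
  define P where "P = before_edge K ent T e"
  obtain p where p: "finite p" "p \<subseteq> {f\<in>T. ent f \<le> ent e}" "bd1 p = e"
    using MST_path_before_edge[OF finite_C simplices_subset_C MST eK eT] by blast
  obtain u v where uv: "e = {u, v}" "u \<noteq> v"
    using eK by (auto simp: edges_def card_2_iff)
  have ep: "e \<notin> p"
    using p(2) eT by auto
  have "bd1 (insert e p) = symdiff (bd1 {e}) (bd1 p)"
    unfolding insert_eq_symdiff[OF ep] using p(1) by (simp add: bd1_symdiff)
  then have "bd1 (insert e p) = {}"
    using p(3) uv(1) bd1_edge[OF uv(2)] by simp
  moreover have "insert e p \<subseteq> edges (insert e P)"
  proof
    fix f
    assume f: "f \<in> insert e p"
    show "f \<in> edges (insert e P)"
    proof (cases "f = e")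
      case True
      then show ?thesis
        using eK by (auto simp: edges_def)
    next
      case False
      then have "f \<in> T" "ent f \<le> ent e"
        using f p(2) by auto
      moreover have "f \<in> edges K"
        using \<open>f \<in> T\<close> T_subset_edges by auto
      ultimately show ?thesis
        using False by (cases "ent f < ent e") (auto simp: edges_def P_def before_edge_def)
    qed
  qed
  ultimately have "insert e p \<in> cycles1 (insert e P)"
    by (simp add: cycles1_def)
  then obtain z y where z: "z \<in> cycles1 (insert e P)" "e \<in> z" and y: "y \<in> cycles1 P"
    and zy: "homologous (Q (ent e)) z y"
    using nc eK unfolding critical_def Let_def P_def by blast
  show thesis
  proof
    show "symdiff (z - {e}) y \<subseteq> edges (before_edge K ent T e)"
      using z(1) y unfolding P_def[symmetric]
      by (intro symdiff_subset) (auto simp: cycles1_def edges_def)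
    have "symdiff {e} (symdiff (z - {e}) y) = symdiff z y"
      using z(2) by (auto simp: symdiff_def)
    then show "rel_null (Q (ent e)) (M (ent e)) (symdiff {e} (symdiff (z - {e}) y))"
      using zy rel_null_bd2 by (auto simp: homologous_def)
  qed
qed

lemma represented_edge:
  assumes "e \<in> edges K" "ent e \<le> \<alpha>"
  shows "represented (Q \<alpha>) (M \<alpha>) (alive \<alpha>) {e}"
  using assms
proof (induction "card {\<sigma>\<in>K. ent \<sigma> < ent e}" arbitrary: e rule: less_induct)
  case less
  consider "e \<in> T" | "critical K ent T e" | "e \<notin> T" "\<not> critical K ent T e"
    by blast
  then show ?case
  proof cases
    case 1
    then show ?thesis
      using represented_MST_edge less.prems(2) by blast
  next
    case 2
    then show ?thesis
      using represented_critical_edge less.prems(2) by blast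
  next
    case 3
    obtain c where c: "c \<subseteq> edges (before_edge K ent T e)"
      and rel: "rel_null (Q (ent e)) (M (ent e)) (symdiff {e} c)"
      using noncritical_edge_rel_null[OF less.prems(1) 3] by blast
    have "represented (Q \<alpha>) (M \<alpha>) (alive \<alpha>) {g}" if g: "g \<in> c" for g
    proof -
      consider "g \<in> K" "ent g < ent e" "card g = 2" | "g \<in> T" "ent g = ent e"
        using g c by (auto simp: before_edge_def edges_def)
      then show ?thesis
      proof cases
        case 1
        then have "card {\<sigma>\<in>K. ent \<sigma> < ent g} < card {\<sigma>\<in>K. ent \<sigma> < ent e}"
          using finite_K by (intro psubset_card_mono) auto
        then show ?thesis
          using less.hyps 1 less.prems(2) by (simp add: edges_def)
      next
        case 2
        then show ?thesis
          using represented_MST_edge less.prems(2) by simp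
      qed
    qed
    moreover have "finite c"
      using c T_subset_edges finite_K
      by (auto simp: before_edge_def edges_def intro: finite_subset)
    ultimately have "represented (Q \<alpha>) (M \<alpha>) (alive \<alpha>) c"
      using finite_Q by (intro represented_if_edges_represented) auto
    moreover have "rel_null (Q \<alpha>) (M \<alpha>) (symdiff {e} c)"
      using rel_null_mono[OF Q_mono M_mono rel] less.prems(2) by blast
    ultimately show ?thesis
      using represented_if_rel_null_symdiff[OF finite_Q] by blast
  qed
qed

lemma edges_HoPeS_cases:
  "e \<in> edges (HoPeS \<alpha>) \<Longrightarrow> (e \<in> T \<and> ent e \<le> \<alpha>) \<or> e \<in> alive \<alpha>"
  by (auto simp: HoPeS_at_def edges_def vertices_cplx_def alive_def edge_len_def)

lemma alive_subset_edges_HoPeS: "alive \<alpha> \<subseteq> edges (HoPeS \<alpha>)"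
  using critical_in_edges by (auto simp: HoPeS_at_def edges_def alive_def)

lemma edges_M_subset_HoPeS: "edges (M \<alpha>) \<subseteq> edges (HoPeS \<alpha>)"
  by (auto simp: HoPeS_at_def edges_def MST_at_def vertices_cplx_def)

lemma edges_HoPeS_subset_Q: "edges (HoPeS \<alpha>) \<subseteq> edges (Q \<alpha>)"
proof
  fix e
  assume e: "e \<in> edges (HoPeS \<alpha>)"
  then have "e \<in> K \<and> ent e \<le> \<alpha>"
    using edges_HoPeS_cases[OF e] T_subset_edges critical_in_edges
    by (auto simp: alive_def edges_def edge_len_def)
  then show "e \<in> edges (Q \<alpha>)"
    using e by (simp add: edges_def Qc_def)
qed

lemma triangles_HoPeS: "triangles (HoPeS \<alpha>) = {}"
  using T_subset_edges critical_in_edges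
  by (auto simp: triangles_def HoPeS_at_def vertices_cplx_def edges_def)

lemma finite_cycle: "z \<in> cycles1 (Q \<alpha>) \<Longrightarrow> finite z"
  using finite_Q by (auto simp: cycles1_def edges_def intro: finite_subset)

text \<open>The non-tree part S of the difference of the two cycles lies in ker f and avoids the
  leading variables (those are dead at \<alpha>), so it vanishes; the rest is a cycle in the tree.\<close>

lemma HoPeS_cycles_eq_if_homologous:
  assumes z1: "z1 \<in> cycles1 (HoPeS \<alpha>)" and z2: "z2 \<in> cycles1 (HoPeS \<alpha>)"
    and hom: "homologous (Q \<alpha>) z1 z2"
  shows "z1 = z2"
proof -
  obtain d where d: "d \<subseteq> triangles (Q \<alpha>)" "symdiff z1 z2 = bd2 d"
    using hom unfolding homologous_def by blast
  define z where "z = symdiff z1 z2"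
  define Y where "Y = {e\<in>T. ent e \<le> \<alpha>}"
  define S where "S = z - Y"
  have "z \<subseteq> edges (HoPeS \<alpha>)"
    using z1 z2 unfolding z_def cycles1_def by (simp add: symdiff_subset)
  then have S_alive: "S \<subseteq> alive \<alpha>"
    using edges_HoPeS_cases by (auto simp: S_def Y_def)
  then have SA: "S \<subseteq> unassigned \<alpha>" and SL: "S \<inter> dying \<alpha> = {}"
    by (auto simp: alive_def unassigned_def dying_def edge_len_def)
  have "S = symdiff (bd2 d) (z \<inter> Y)"
    using d(2) unfolding z_def[symmetric] by (auto simp: S_def symdiff_def)
  moreover have "z \<inter> Y \<subseteq> edges (M \<alpha>)"
    using T_subset_edges by (auto simp: Y_def MST_at_def edges_def edge_len_def)
  ultimately have "rel_null (Q \<alpha>) (M \<alpha>) S"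
    unfolding rel_null_def using d(1) by blast
  then have "S \<in> ker_f C K ent T \<alpha> (unassigned \<alpha>)"
    using SA by (simp add: ker_f_def)
  then have "S = {}"
    using leading_set_free_part_zero[OF leading_set_dying _ SA SL] by blast
  then have "z \<subseteq> T"
    by (auto simp: S_def Y_def)
  moreover have "bd1 z = {}"
  proof -
    have "z1 \<in> cycles1 (Q \<alpha>)" "z2 \<in> cycles1 (Q \<alpha>)"
      using z1 z2 edges_HoPeS_subset_Q[of \<alpha>] by (auto simp: cycles1_def)
    then have "finite z1" "finite z2"
      by (simp_all add: finite_cycle)
    then show ?thesis
      using z1 z2 unfolding z_def by (simp add: bd1_symdiff cycles1_def)
  qed
  ultimately have "z = {}"
    using spanning_tree_cycle_empty[OF finite_C spanning_tree simplices_subset_C] by blast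
  then show ?thesis
    by (simp add: z_def symdiff_eq_empty_iff)
qed

text \<open>Write z \<equiv> S + y modulo boundaries, with S alive and y in MST(C;\<alpha>); then S + y is the
  required cycle of HoPeS(C;\<alpha>).\<close>

lemma cycle_homologous_to_HoPeS_cycle:
  assumes z: "z \<in> cycles1 (Q \<alpha>)"
  shows "\<exists>w\<in>cycles1 (HoPeS \<alpha>). homologous (Q \<alpha>) z w"
proof -
  have fz: "finite z"
    using z by (rule finite_cycle)
  have "represented (Q \<alpha>) (M \<alpha>) (alive \<alpha>) {g}" if "g \<in> z" for g
    using z that represented_edge by (auto simp: cycles1_def edges_def Qc_def)
  then have "represented (Q \<alpha>) (M \<alpha>) (alive \<alpha>) z"
    using finite_Q fz by (intro represented_if_edges_represented) auto
  then obtain S d y where S: "S \<subseteq> alive \<alpha>" and d: "d \<subseteq> triangles (Q \<alpha>)"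
    and y: "y \<subseteq> edges (M \<alpha>)" and zS: "symdiff z S = symdiff (bd2 d) y"
    unfolding represented_def rel_null_def by blast
  define w where "w = symdiff S y"
  have zw: "symdiff z w = bd2 d"
    using zS by (auto simp: w_def symdiff_def)
  then have w_eq: "w = symdiff z (bd2 d)"
    by (metis symdiff_cancel_left)
  have fd: "finite d" and d3: "\<forall>t\<in>d. card t = 3"
    using d finite_Q finite_subset_triangles by (auto simp: triangles_def)
  have "finite (bd2 d)"
    using fd d3 card.infinite by (intro finite_bd2) force+
  then have "bd1 w = symdiff (bd1 z) (bd1 (bd2 d))"
    unfolding w_eq using fz by (simp add: bd1_symdiff)
  then have "bd1 w = {}"
    using z bd1_bd2[OF fd d3] by (simp add: cycles1_def)
  moreover have "w \<subseteq> edges (HoPeS \<alpha>)"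
    unfolding w_def using S y alive_subset_edges_HoPeS edges_M_subset_HoPeS
    by (intro symdiff_subset) blast+
  moreover have "homologous (Q \<alpha>) z w"
    unfolding homologous_def using zw d by blast
  ultimately show ?thesis
    by (auto simp: cycles1_def)
qed

end

theorem mainTheorem6:
  fixes C :: "'v set" and K :: "'v set set" and ent :: "'v set \<Rightarrow> real"
    and T :: "'v set set" and D :: "'v set \<Rightarrow> ereal" and \<alpha> :: real
  assumes "filtration C K ent"
    and "graph_connected C (edges K)"
    and "is_MST C K ent T"
    and "valid_deaths C K ent T D"
    and "0 \<le> \<alpha>"
  shows "bij_betw (H1_incl (HoPeS_at C K ent T D \<alpha>) (Qc K ent \<alpha>))
           (H1 (HoPeS_at C K ent T D \<alpha>)) (H1 (Qc K ent \<alpha>))"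
proof -
  interpret MST_filtration C K ent T D
    using assms(1,3,4) by unfold_locales
  show ?thesis
    using finite_Q triangles_HoPeS edges_HoPeS_subset_Q
      HoPeS_cycles_eq_if_homologous cycle_homologous_to_HoPeS_cycle
    by (rule bij_betw_H1_incl)
qed

end
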